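(* Let $\ell>0$ and let $M$ have local coordinates $(x,y,\alpha,\beta)$ with $\cos\alpha\neq0$, $\cos\beta\neq0$. Let $X_3=\partial_\beta$ and $X_4=-\sin\beta\,\partial_\alpha+\ell\cos\beta(\cos\alpha\,\partial_x+\sin\alpha\,\partial_y)$. Then the change of coordinates $(x,y,\alpha,\beta)\mapsto(x,y,p,q)$ with $p=\tan\alpha$, $q=-\ell^{-1}\tan\beta\sec^3\alpha$ is a local diffeomorphism which maps $\mathrm{Span}(X_3)$ to $\mathrm{Span}(\partial_q)$ and $\mathrm{Span}(X_4)$ to $\mathrm{Span}\big(\partial_x+p\partial_y+q\partial_p+\tfrac{3pq^2}{1+p^2}\partial_q\big)$. Consequently, the Engel structure with a split $(M,\mathrm{Span}(X_3)\oplus\mathrm{Span}(X_4))$ is locally equivalent to the Engel structure with a split on the second jet space $\mathcal{J}^2$ (coordinates $(x,y,p=y',q=y'')$) associated with the third order ODE $y'''=\frac{3y'y''^2}{1+y'^2}$, given by the vertical direction $\partial_q$ and the total derivative direction of the equation; and the general solution of this ODE is $\nu(x^2+y^2)-2\xi x-2\eta y+\mu=0$ with real constants $\nu,\xi,\eta,\mu$, i.e. its solution graphs are circles and straight lines in the $(x,y)$-plane.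
   Context: An Engel structure with a split is a 4-manifold with a rank 2 distribution $\mathcal{D}$ whose derived flag has constant ranks $2,3,4$, together with a splitting $\mathcal{D}=\mathcal{D}_1\oplus\mathcal{D}_2$ into rank one subdistributions; two such are locally equivalent if a local diffeomorphism carries $\mathcal{D}_1$ to $\bar{\mathcal{D}}_1$ and $\mathcal{D}_2$ to $\bar{\mathcal{D}}_2$. For an ODE $y'''=F(x,y,y',y'')$ on $\mathcal{J}^2$ with coordinates $(x,y,p,q)$, the associated split is $\mathrm{Span}(\partial_q)\oplus\mathrm{Span}(\partial_x+p\partial_y+q\partial_p+F\partial_q)$. *)

theory Defs
  imports "HOL-Analysis.Analysis"
begin

text \<open>On M the coordinates are (x, y, alpha, beta);
on the second jet space J2 the coordinates are (x, y, p, q). Tangent vectors are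
represented by their coordinate components in the same tuple type.\<close>

type_synonym pt4 = "real \<times> real \<times> real \<times> real"

definition M_dom :: "pt4 set" where
  "M_dom = {(x, y, a, b). cos a \<noteq> 0 \<and> cos b \<noteq> 0}"

definition X3 :: "pt4 \<Rightarrow> pt4" where
  "X3 u = (0, 0, 0, 1)"

definition X4 :: "real \<Rightarrow> pt4 \<Rightarrow> pt4" where
  "X4 l = (\<lambda>(x, y, a, b). (l * cos b * cos a, l * cos b * sin a, - sin b, 0))"

definition Phi :: "real \<Rightarrow> pt4 \<Rightarrow> pt4" where
  "Phi l = (\<lambda>(x, y, a, b). (x, y, tan a, - (inverse l) * tan b * (inverse (cos a)) ^ 3))"

definition vert :: "pt4 \<Rightarrow> pt4" where
  "vert w = (0, 0, 0, 1)"

definition total_deriv :: "(real \<Rightarrow> real \<Rightarrow> real \<Rightarrow> real \<Rightarrow> real) \<Rightarrow> pt4 \<Rightarrow> pt4" where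
  "total_deriv F = (\<lambda>(x, y, p, q). (1, p, q, F x y p q))"

definition F_circ :: "real \<Rightarrow> real \<Rightarrow> real \<Rightarrow> real \<Rightarrow> real" where
  "F_circ x y p q = 3 * p * q ^ 2 / (1 + p ^ 2)"

definition local_diffeo_on :: "(pt4 \<Rightarrow> pt4) \<Rightarrow> pt4 set \<Rightarrow> bool" where
  "local_diffeo_on f U \<longleftrightarrow>
     (\<forall>u\<in>U. \<exists>V W g. open V \<and> u \<in> V \<and> V \<subseteq> U \<and> open W \<and> f ` V = W \<and>
        (\<forall>v\<in>V. g (f v) = v) \<and> (\<forall>w\<in>W. f (g w) = w) \<and>
        f differentiable_on V \<and> g differentiable_on W)"

definition maps_span_on :: "(pt4 \<Rightarrow> pt4) \<Rightarrow> pt4 set \<Rightarrow> (pt4 \<Rightarrow> pt4) \<Rightarrow> (pt4 \<Rightarrow> pt4) \<Rightarrow> bool" where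
  "maps_span_on f U X Y \<longleftrightarrow>
     (\<forall>u\<in>U. \<exists>D. (f has_derivative D) (at u) \<and> (\<exists>c. c \<noteq> 0 \<and> D (X u) = c *\<^sub>R Y (f u)))"

definition thrice_diff :: "(real \<Rightarrow> real) \<Rightarrow> (real \<Rightarrow> real) \<Rightarrow> (real \<Rightarrow> real) \<Rightarrow> (real \<Rightarrow> real) \<Rightarrow> real set \<Rightarrow> bool" where
  "thrice_diff f f1 f2 f3 I \<longleftrightarrow>
     (\<forall>x\<in>I. (f has_real_derivative f1 x) (at x) \<and> (f1 has_real_derivative f2 x) (at x) \<and>
             (f2 has_real_derivative f3 x) (at x))"

end

theory Submission
  imports Defs
begin

text \<open>
The equation y''' = 3 y' y''^2 / (1 + y'^2) says that the curvature
kappa = y'' / (1 + y'^2)^(3/2) of the graph is constant. Hence along a solution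
kappa^2 is a first integral; if kappa = 0 the graph is a line, otherwise the centre of
curvature (x - y'(1 + y'^2)/y'', y + (1 + y'^2)/y'') is constant as well and the graph
lies on the circle of radius 1/|kappa| about it. Conversely, differentiating the
equation of a circle or line three times and eliminating the constants gives the ODE.

For the split, p = tan alpha and q = - tan beta sec^3 alpha / l can be inverted on each
branch of arctan, and a direct computation of the differential of this change of
coordinates shows that it sends X3 to a multiple of d/dq and X4 to l cos alpha cos beta
times the total derivative direction.
\<close>

definition on_circle_or_line :: "(real \<Rightarrow> real) \<Rightarrow> real set \<Rightarrow> bool" where
  "on_circle_or_line f S \<longleftrightarrow>
     (\<exists>\<nu> \<xi> \<eta> \<mu>. (\<nu>, \<xi>, \<eta>) \<noteq> (0, 0, 0) \<and>
        (\<forall>x\<in>S. \<nu> * (x\<^sup>2 + (f x)\<^sup>2) - 2 * \<xi> * x - 2 * \<eta> * f x + \<mu> = 0))"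

lemma thrice_diffD:
  assumes "thrice_diff f f1 f2 f3 S" "x \<in> S"
  shows "(f has_real_derivative f1 x) (at x)" "(f1 has_real_derivative f2 x) (at x)"
    "(f2 has_real_derivative f3 x) (at x)"
  using assms by (auto simp: thrice_diff_def)

lemma DERIV_vanishing_on_open:
  fixes G :: "real \<Rightarrow> real"
  assumes "open S" "x \<in> S" "\<forall>y\<in>S. G y = 0" "(G has_real_derivative d) (at x)"
  shows "d = 0"
proof -
  have "((\<lambda>y. 0) has_real_derivative d) (at x)"
    using has_field_derivative_transform_within_open[OF assms(4,1,2)] assms(3) by auto
  then show ?thesis using DERIV_unique DERIV_const by blast
qed

lemma DERIV_zero_imp_constant_on_convex:
  fixes G :: "real \<Rightarrow> real"
  assumes "convex S" "\<And>y. y \<in> S \<Longrightarrow> (G has_real_derivative 0) (at y)"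
  shows "\<exists>c. \<forall>y\<in>S. G y = c"
  using has_field_derivative_zero_constant[OF assms(1)] assms(2)
  by (meson has_field_derivative_at_within)

lemma one_add_power2_gt_zero: "0 < 1 + (t::real)\<^sup>2"
  by (simp add: add_pos_nonneg)

lemma F_circ_eq_iff:
  "z = F_circ x y p q \<longleftrightarrow> z * (1 + p\<^sup>2) = 3 * p * q\<^sup>2"
  using one_add_power2_gt_zero[of p] by (simp add: F_circ_def field_simps)

subsection \<open>Circles and lines solve the equation\<close>

lemma circle_derivative_identities:
  assumes "open S" "thrice_diff f f1 f2 f3 S"
    and circle: "\<forall>x\<in>S. \<nu> * (x\<^sup>2 + (f x)\<^sup>2) - 2 * \<xi> * x - 2 * \<eta> * f x + \<mu> = 0"
    and "x \<in> S"
  shows "\<nu> * x - \<xi> + (\<nu> * f x - \<eta>) * f1 x = 0"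
    and "\<nu> + \<nu> * (f1 x)\<^sup>2 + (\<nu> * f x - \<eta>) * f2 x = 0"
    and "3 * \<nu> * f1 x * f2 x + (\<nu> * f x - \<eta>) * f3 x = 0"
proof -
  note d = thrice_diffD[OF assms(2)]
  have E1: "\<forall>y\<in>S. \<nu> * y - \<xi> + (\<nu> * f y - \<eta>) * f1 y = 0"
  proof
    fix y assume y: "y \<in> S"
    have "((\<lambda>x. \<nu> * (x\<^sup>2 + (f x)\<^sup>2) - 2 * \<xi> * x - 2 * \<eta> * f x + \<mu>) has_real_derivative
        2 * (\<nu> * y - \<xi> + (\<nu> * f y - \<eta>) * f1 y)) (at y)"
      using d[OF y] by (auto intro!: derivative_eq_intros simp: algebra_simps)
    from DERIV_vanishing_on_open[OF \<open>open S\<close> y circle this]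
    show "\<nu> * y - \<xi> + (\<nu> * f y - \<eta>) * f1 y = 0" by simp
  qed
  have E2: "\<forall>y\<in>S. \<nu> + \<nu> * (f1 y)\<^sup>2 + (\<nu> * f y - \<eta>) * f2 y = 0"
  proof
    fix y assume y: "y \<in> S"
    have "((\<lambda>y. \<nu> * y - \<xi> + (\<nu> * f y - \<eta>) * f1 y) has_real_derivative
        \<nu> + \<nu> * (f1 y)\<^sup>2 + (\<nu> * f y - \<eta>) * f2 y) (at y)"
      using d[OF y] by (auto intro!: derivative_eq_intros simp: power2_eq_square)
    then show "\<nu> + \<nu> * (f1 y)\<^sup>2 + (\<nu> * f y - \<eta>) * f2 y = 0"
      using DERIV_vanishing_on_open[OF \<open>open S\<close> y E1] by simp
  qed
  have "((\<lambda>y. \<nu> + \<nu> * (f1 y)\<^sup>2 + (\<nu> * f y - \<eta>) * f2 y) has_real_derivative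
      3 * \<nu> * f1 x * f2 x + (\<nu> * f x - \<eta>) * f3 x) (at x)"
    using d[OF \<open>x \<in> S\<close>] by (auto intro!: derivative_eq_intros simp: algebra_simps)
  then show "3 * \<nu> * f1 x * f2 x + (\<nu> * f x - \<eta>) * f3 x = 0"
    using DERIV_vanishing_on_open[OF \<open>open S\<close> \<open>x \<in> S\<close> E2] by simp
  show "\<nu> * x - \<xi> + (\<nu> * f x - \<eta>) * f1 x = 0" "\<nu> + \<nu> * (f1 x)\<^sup>2 + (\<nu> * f x - \<eta>) * f2 x = 0"
    using E1 E2 \<open>x \<in> S\<close> by auto
qed

lemma circle_or_line_imp_ode:
  assumes "open S" "thrice_diff f f1 f2 f3 S" "on_circle_or_line f S" "x \<in> S"
  shows "f3 x = F_circ x (f x) (f1 x) (f2 x)"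
proof -
  obtain \<nu> \<xi> \<eta> \<mu> where nz: "(\<nu>, \<xi>, \<eta>) \<noteq> (0, 0, 0)"
    and circle: "\<forall>x\<in>S. \<nu> * (x\<^sup>2 + (f x)\<^sup>2) - 2 * \<xi> * x - 2 * \<eta> * f x + \<mu> = 0"
    using assms(3) by (auto simp: on_circle_or_line_def)
  note E = circle_derivative_identities[OF assms(1,2) circle assms(4)]
  let ?w = "\<nu> * f x - \<eta>"
  have "?w \<noteq> 0"
  proof
    assume "?w = 0"
    then have "\<nu> * (1 + (f1 x)\<^sup>2) = 0" using E(2) by (simp add: algebra_simps)
    then have "\<nu> = 0" using one_add_power2_gt_zero[of "f1 x"] by simp
    then show False using nz E(1) \<open>?w = 0\<close> by simp
  qed
  have w_f2: "?w * f2 x = - \<nu> * (1 + (f1 x)\<^sup>2)" using E(2) by (simp add: algebra_simps)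
  have w_f3: "?w * f3 x = - 3 * \<nu> * f1 x * f2 x" using E(3) by (simp add: algebra_simps)
  have "?w * (f3 x * (1 + (f1 x)\<^sup>2)) = (?w * f3 x) * (1 + (f1 x)\<^sup>2)" by simp
  also have "\<dots> = 3 * f1 x * f2 x * (?w * f2 x)" by (simp add: w_f2 w_f3)
  also have "\<dots> = ?w * (3 * f1 x * (f2 x)\<^sup>2)" by (simp add: power2_eq_square)
  finally show ?thesis
    using \<open>?w \<noteq> 0\<close> by (simp add: F_circ_eq_iff)
qed

subsection \<open>Every solution is a circle or a line\<close>

lemma ode_curvature_squared_constant:
  assumes "convex S" "thrice_diff f f1 f2 f3 S"
    and ode: "\<forall>x\<in>S. f3 x = F_circ x (f x) (f1 x) (f2 x)"
  shows "\<exists>K. \<forall>x\<in>S. (f2 x)\<^sup>2 / (1 + (f1 x)\<^sup>2) ^ 3 = K"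
proof (rule DERIV_zero_imp_constant_on_convex[OF \<open>convex S\<close>])
  fix y assume y: "y \<in> S"
  let ?s = "1 + (f1 y)\<^sup>2"
  have "?s ^ 3 \<noteq> 0" using one_add_power2_gt_zero[of "f1 y"] by simp
  then have "((\<lambda>y. (f2 y)\<^sup>2 / (1 + (f1 y)\<^sup>2) ^ 3) has_real_derivative
      (2 * f2 y * f3 y * ?s ^ 3 - (f2 y)\<^sup>2 * (3 * ?s\<^sup>2 * (2 * f1 y * f2 y))) / (?s ^ 3)\<^sup>2) (at y)"
    using thrice_diffD[OF assms(2) y]
    by (auto intro!: derivative_eq_intros simp: field_simps power2_eq_square)
  moreover have "2 * f2 y * f3 y * ?s ^ 3 = (f2 y)\<^sup>2 * (3 * ?s\<^sup>2 * (2 * f1 y * f2 y))"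
  proof -
    have "2 * f2 y * f3 y * ?s ^ 3 = 2 * f2 y * (f3 y * ?s) * ?s\<^sup>2"
      by (simp add: power3_eq_cube power2_eq_square)
    also have "\<dots> = 2 * f2 y * (3 * f1 y * (f2 y)\<^sup>2) * ?s\<^sup>2"
      using ode y by (simp add: F_circ_eq_iff)
    finally show ?thesis by (simp add: power2_eq_square)
  qed
  ultimately show "((\<lambda>y. (f2 y)\<^sup>2 / (1 + (f1 y)\<^sup>2) ^ 3) has_real_derivative 0) (at y)"
    by simp
qed

lemma on_circle_or_line_if_second_derivative_zero:
  assumes "convex S" "thrice_diff f f1 f2 f3 S" "\<forall>x\<in>S. f2 x = 0"
  shows "on_circle_or_line f S"
proof -
  note d = thrice_diffD[OF assms(2)]
  obtain m where m: "\<forall>y\<in>S. f1 y = m"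
    using DERIV_zero_imp_constant_on_convex[OF \<open>convex S\<close>, of f1] d assms(3) by force
  have "\<exists>c. \<forall>y\<in>S. f y - m * y = c"
  proof (rule DERIV_zero_imp_constant_on_convex[OF \<open>convex S\<close>])
    fix y assume y: "y \<in> S"
    show "((\<lambda>y. f y - m * y) has_real_derivative 0) (at y)"
      using d(1)[OF y] m y by (auto intro!: derivative_eq_intros)
  qed
  then obtain c where "\<forall>y\<in>S. f y - m * y = c" by blast
  then show ?thesis
    unfolding on_circle_or_line_def
    by (intro exI[of _ 0] exI[of _ "- m / 2"] exI[of _ "1 / 2"] exI[of _ c]) auto
qed

lemma ode_center_of_curvature_constant:
  assumes "convex S" "thrice_diff f f1 f2 f3 S"
    and ode: "\<forall>x\<in>S. f3 x = F_circ x (f x) (f1 x) (f2 x)"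
    and nz: "\<forall>x\<in>S. f2 x \<noteq> 0"
  shows "\<exists>X0. \<forall>x\<in>S. x - f1 x * (1 + (f1 x)\<^sup>2) / f2 x = X0"
    and "\<exists>Y0. \<forall>x\<in>S. f x + (1 + (f1 x)\<^sup>2) / f2 x = Y0"
proof -
  have o: "(1 + (f1 y)\<^sup>2) * f3 y = 3 * f1 y * (f2 y)\<^sup>2" if "y \<in> S" for y
    using ode that by (simp add: F_circ_eq_iff ac_simps)
  note d = thrice_diffD[OF assms(2)]
  show "\<exists>X0. \<forall>x\<in>S. x - f1 x * (1 + (f1 x)\<^sup>2) / f2 x = X0"
  proof (rule DERIV_zero_imp_constant_on_convex[OF \<open>convex S\<close>])
    fix y assume y: "y \<in> S"
    have "((\<lambda>y. y - f1 y * (1 + (f1 y)\<^sup>2) / f2 y) has_real_derivative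
        1 - ((f2 y * (1 + (f1 y)\<^sup>2) + f1 y * (2 * f1 y * f2 y)) * f2 y
          - f1 y * ((1 + (f1 y)\<^sup>2) * f3 y)) / (f2 y)\<^sup>2) (at y)"
      using d[OF y] nz y by (auto intro!: derivative_eq_intros simp: field_simps power2_eq_square)
    then show "((\<lambda>y. y - f1 y * (1 + (f1 y)\<^sup>2) / f2 y) has_real_derivative 0) (at y)"
      using nz y unfolding o[OF y] by (simp add: field_simps power2_eq_square)
  qed
  show "\<exists>Y0. \<forall>x\<in>S. f x + (1 + (f1 x)\<^sup>2) / f2 x = Y0"
  proof (rule DERIV_zero_imp_constant_on_convex[OF \<open>convex S\<close>])
    fix y assume y: "y \<in> S"
    have "((\<lambda>y. f y + (1 + (f1 y)\<^sup>2) / f2 y) has_real_derivative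
        f1 y + ((2 * f1 y * f2 y) * f2 y - (1 + (f1 y)\<^sup>2) * f3 y) / (f2 y)\<^sup>2) (at y)"
      using d[OF y] nz y by (auto intro!: derivative_eq_intros simp: field_simps power2_eq_square)
    then show "((\<lambda>y. f y + (1 + (f1 y)\<^sup>2) / f2 y) has_real_derivative 0) (at y)"
      using nz y unfolding o[OF y] by (simp add: field_simps power2_eq_square)
  qed
qed

lemma ode_imp_on_circle_or_line:
  assumes "convex S" "thrice_diff f f1 f2 f3 S"
    and ode: "\<forall>x\<in>S. f3 x = F_circ x (f x) (f1 x) (f2 x)"
  shows "on_circle_or_line f S"
proof -
  obtain K where K: "\<forall>x\<in>S. (f2 x)\<^sup>2 / (1 + (f1 x)\<^sup>2) ^ 3 = K"
    using ode_curvature_squared_constant[OF assms] by blast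
  have pos: "(1 + (f1 x)\<^sup>2) ^ 3 > 0" for x using one_add_power2_gt_zero[of "f1 x"] by simp
  show ?thesis
  proof (cases "K = 0")
    case True
    then have "\<forall>x\<in>S. f2 x = 0" using K pos by (metis divide_eq_0_iff less_irrefl power_eq_0_iff)
    then show ?thesis by (rule on_circle_or_line_if_second_derivative_zero[OF assms(1,2)])
  next
    case False
    then have nz: "\<forall>x\<in>S. f2 x \<noteq> 0" using K by fastforce
    obtain X0 Y0 where X0: "\<forall>x\<in>S. x - f1 x * (1 + (f1 x)\<^sup>2) / f2 x = X0"
      and Y0: "\<forall>x\<in>S. f x + (1 + (f1 x)\<^sup>2) / f2 x = Y0"
      using ode_center_of_curvature_constant[OF assms nz] by blast
    have "(x - X0)\<^sup>2 + (f x - Y0)\<^sup>2 = 1 / K" if x: "x \<in> S" for x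
    proof -
      have center_radius: "x - X0 = f1 x * (1 + (f1 x)\<^sup>2) / f2 x"
          "f x - Y0 = - ((1 + (f1 x)\<^sup>2) / f2 x)" "1 / K = (1 + (f1 x)\<^sup>2) ^ 3 / (f2 x)\<^sup>2"
        using X0 Y0 K x by force+
      show ?thesis
        unfolding center_radius using nz x by (simp add: field_simps power2_eq_square power3_eq_cube)
    qed
    then show ?thesis
      unfolding on_circle_or_line_def
      by (intro exI[of _ 1] exI[of _ X0] exI[of _ Y0] exI[of _ "X0\<^sup>2 + Y0\<^sup>2 - 1 / K"])
        (auto simp: power2_eq_square algebra_simps)
  qed
qed

subsection \<open>The change of coordinates\<close>

definition Phi_deriv :: "real \<Rightarrow> pt4 \<Rightarrow> pt4 \<Rightarrow> pt4" where
  "Phi_deriv l = (\<lambda>(x, y, a, b) (dx, dy, da, db).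
     (dx, dy, da / cos a ^ 2,
      - inverse l * (db / cos b ^ 2 * inverse (cos a) ^ 3 + 3 * tan b * sin a / cos a ^ 4 * da)))"

lemma Phi_eq_projections:
  "Phi l = (\<lambda>u. (fst u, fst (snd u), tan (fst (snd (snd u))),
      - inverse l * tan (snd (snd (snd u))) * inverse (cos (fst (snd (snd u)))) ^ 3))"
  by (auto simp: Phi_def fun_eq_iff)

lemma has_derivative_Phi:
  assumes "cos a \<noteq> 0" "cos b \<noteq> 0"
  shows "(Phi l has_derivative Phi_deriv l (x, y, a, b)) (at (x, y, a, b))"
proof -
  have "cos (fst (snd (snd u))) \<noteq> 0 \<Longrightarrow> cos (snd (snd (snd u))) \<noteq> 0 \<Longrightarrow>
      (Phi l has_derivative Phi_deriv l u) (at u)" for u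
    unfolding Phi_eq_projections
    apply (rule derivative_eq_intros refl | simp)+
    apply (auto simp: Phi_deriv_def fun_eq_iff divide_simps split_beta)
    apply algebra
    done
  then show ?thesis using assms by simp
qed

lemma maps_span_on_PhiI:
  assumes "\<And>x y a b. cos a \<noteq> 0 \<Longrightarrow> cos b \<noteq> 0 \<Longrightarrow>
      \<exists>c. c \<noteq> 0 \<and> Phi_deriv l (x, y, a, b) (X (x, y, a, b)) = c *\<^sub>R Y (Phi l (x, y, a, b))"
  shows "maps_span_on (Phi l) M_dom X Y"
  unfolding maps_span_on_def
proof
  fix u assume "u \<in> M_dom"
  then obtain x y a b where "u = (x, y, a, b)" "cos a \<noteq> 0" "cos b \<noteq> 0"
    by (auto simp: M_dom_def)
  then show "\<exists>D. (Phi l has_derivative D) (at u) \<and> (\<exists>c. c \<noteq> 0 \<and> D (X u) = c *\<^sub>R Y (Phi l u))"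
    using assms has_derivative_Phi by blast
qed

lemma Phi_deriv_X3:
  "Phi_deriv l (x, y, a, b) (X3 (x, y, a, b))
     = (- inverse l / cos b ^ 2 * inverse (cos a) ^ 3) *\<^sub>R vert (Phi l (x, y, a, b))"
  by (simp add: Phi_deriv_def X3_def vert_def)

lemma Phi_deriv_X4:
  assumes "cos a \<noteq> 0" "cos b \<noteq> 0" "l \<noteq> 0"
  shows "Phi_deriv l (x, y, a, b) (X4 l (x, y, a, b))
     = (l * cos b * cos a) *\<^sub>R total_deriv F_circ (Phi l (x, y, a, b))"
proof -
  have sec2: "1 + (sin a / cos a)\<^sup>2 = 1 / (cos a)\<^sup>2"
    using assms by (simp add: field_simps sin_squared_eq)
  show ?thesis
    using assms
    unfolding Phi_deriv_def X4_def total_deriv_def Phi_def F_circ_def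
    apply (simp add: tan_def sec2)
    apply (simp add: field_simps)
    apply (intro conjI disjI2; algebra)
    done
qed

lemma maps_span_on_Phi_X3:
  assumes "l \<noteq> 0"
  shows "maps_span_on (Phi l) M_dom X3 vert"
proof (rule maps_span_on_PhiI)
  fix x y a b :: real assume "cos a \<noteq> 0" "cos b \<noteq> 0"
  then show "\<exists>c. c \<noteq> 0 \<and> Phi_deriv l (x, y, a, b) (X3 (x, y, a, b)) = c *\<^sub>R vert (Phi l (x, y, a, b))"
    using assms Phi_deriv_X3 by (intro exI[of _ "- inverse l / cos b ^ 2 * inverse (cos a) ^ 3"]) simp
qed

lemma maps_span_on_Phi_X4:
  assumes "l \<noteq> 0"
  shows "maps_span_on (Phi l) M_dom (X4 l) (total_deriv F_circ)"
proof (rule maps_span_on_PhiI)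
  fix x y a b :: real assume "cos a \<noteq> 0" "cos b \<noteq> 0"
  then show "\<exists>c. c \<noteq> 0 \<and> Phi_deriv l (x, y, a, b) (X4 l (x, y, a, b))
      = c *\<^sub>R total_deriv F_circ (Phi l (x, y, a, b))"
    using assms Phi_deriv_X4 by (intro exI[of _ "l * cos b * cos a"]) simp
qed

lemma cos_nonzero_near_int_pi:
  fixes k :: int
  assumes "\<bar>t - of_int k * pi\<bar> < pi/2"
  shows "cos t \<noteq> 0"
proof -
  have "cos (t - of_int k * pi) > 0" using assms by (intro cos_gt_zero_pi) linarith+
  moreover have "sin (of_int k * pi) = 0" by (auto simp: sin_zero_iff_int2)
  then have "cos (of_int k * pi) \<noteq> 0" using sin_cos_squared_add[of "of_int k * pi"] by auto
  moreover have "cos t = cos (t - of_int k * pi) * cos (of_int k * pi)"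
    using cos_add[of "t - of_int k * pi" "of_int k * pi"] \<open>sin (of_int k * pi) = 0\<close> by simp
  ultimately show ?thesis by simp
qed

lemma arctan_tan_near_int_pi:
  fixes k :: int
  assumes "\<bar>t - of_int k * pi\<bar> < pi/2"
  shows "arctan (tan t) + of_int k * pi = t"
proof -
  have "tan t = tan (t - of_int k * pi)"
    using tan_periodic_int[of "t - of_int k * pi" k] by simp
  also have "arctan \<dots> = t - of_int k * pi" using assms by (intro arctan_tan) linarith+
  finally show ?thesis by simp
qed

definition branch :: "int \<Rightarrow> int \<Rightarrow> pt4 set" where
  "branch k j = UNIV \<times> UNIV \<times> {a. \<bar>a - of_int k * pi\<bar> < pi/2} \<times> {b. \<bar>b - of_int j * pi\<bar> < pi/2}"

definition Phi_inv :: "real \<Rightarrow> int \<Rightarrow> int \<Rightarrow> pt4 \<Rightarrow> pt4" where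
  "Phi_inv l k j = (\<lambda>(x, y, p, q). (x, y, arctan p + of_int k * pi,
     arctan (- l * q * cos (arctan p + of_int k * pi) ^ 3) + of_int j * pi))"

lemma open_branch: "open (branch k j)"
proof -
  have "open {a::real. \<bar>a - c\<bar> < pi/2}" for c
    by (intro open_Collect_less continuous_intros)
  then show ?thesis unfolding branch_def by (intro open_Times open_UNIV)
qed

lemma branch_subset_M_dom: "branch k j \<subseteq> M_dom"
  unfolding branch_def M_dom_def using cos_nonzero_near_int_pi by blast

lemma M_dom_covered_by_branches:
  assumes "u \<in> M_dom"
  obtains k j where "u \<in> branch k j"
proof -
  obtain x y a b where u: "u = (x, y, a, b)" "cos a \<noteq> 0" "cos b \<noteq> 0"
    using assms by (auto simp: M_dom_def)
  have near_branch: "\<bar>t - of_int i * pi\<bar> < pi/2" if "arctan (tan t) = t - of_int i * pi" for t i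
    unfolding abs_less_iff using that arctan_bounded[of "tan t"] by linarith
  obtain k where "arctan (tan a) = a - of_int k * pi" using arctan_tan_eq_abs_pi[OF \<open>cos a \<noteq> 0\<close>] .
  moreover obtain j where "arctan (tan b) = b - of_int j * pi" using arctan_tan_eq_abs_pi[OF \<open>cos b \<noteq> 0\<close>] .
  ultimately have "u \<in> branch k j" unfolding branch_def u using near_branch by blast
  then show ?thesis by (rule that)
qed

lemma Phi_inv_maps_into_branch: "Phi_inv l k j w \<in> branch k j"
proof -
  have "\<bar>arctan t + of_int i * pi - of_int i * pi\<bar> < pi/2" for t i
    unfolding abs_less_iff using arctan_bounded[of t] by simp
  then show ?thesis by (simp add: Phi_inv_def branch_def split: prod.splits)
qed

lemma Phi_inv_Phi:
  assumes "l \<noteq> 0" "v \<in> branch k j"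
  shows "Phi_inv l k j (Phi l v) = v"
proof -
  obtain x y a b where v: "v = (x, y, a, b)" and
    a: "\<bar>a - of_int k * pi\<bar> < pi/2" and b: "\<bar>b - of_int j * pi\<bar> < pi/2"
    using assms(2) by (auto simp: branch_def)
  have "- l * (- inverse l * tan b * inverse (cos a) ^ 3) * cos a ^ 3 = tan b"
    using assms(1) cos_nonzero_near_int_pi[OF a] by (simp add: field_simps)
  moreover have "Phi_inv l k j (Phi l v) = (x, y, arctan (tan a) + of_int k * pi,
      arctan (- l * (- inverse l * tan b * inverse (cos a) ^ 3) * cos (arctan (tan a) + of_int k * pi) ^ 3)
        + of_int j * pi)"
    by (simp add: v Phi_def Phi_inv_def)
  ultimately show ?thesis
    by (simp only: v arctan_tan_near_int_pi[OF a] arctan_tan_near_int_pi[OF b])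
qed

lemma Phi_Phi_inv:
  assumes "l \<noteq> 0"
  shows "Phi l (Phi_inv l k j w) = w"
proof -
  obtain x y p q where w: "w = (x, y, p, q)" by (cases w)
  define c where "c = cos (arctan p + of_int k * pi)"
  have "c \<noteq> 0"
    using Phi_inv_maps_into_branch[of l k j w] branch_subset_M_dom
    by (auto simp: w c_def Phi_inv_def M_dom_def)
  then have "- inverse l * (- l * q * c ^ 3) * inverse c ^ 3 = q"
    using assms by (simp add: field_simps)
  then show ?thesis
    by (simp add: w Phi_def Phi_inv_def tan_arctan c_def[symmetric])
qed

lemma Phi_inv_differentiable: "Phi_inv l k j differentiable at w"
proof -
  have eq: "Phi_inv l k j = (\<lambda>w. (fst w, fst (snd w), arctan (fst (snd (snd w))) + of_int k * pi,
      arctan (- l * snd (snd (snd w)) * cos (arctan (fst (snd (snd w))) + of_int k * pi) ^ 3)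
        + of_int j * pi))"
    by (auto simp: Phi_inv_def fun_eq_iff)
  show ?thesis
    unfolding eq by (rule differentiableI, (rule derivative_eq_intros refl)+)
qed

lemma local_diffeo_on_Phi:
  assumes "l \<noteq> 0"
  shows "local_diffeo_on (Phi l) M_dom"
  unfolding local_diffeo_on_def
proof
  fix u assume "u \<in> M_dom"
  then obtain k j where u: "u \<in> branch k j" by (rule M_dom_covered_by_branches)
  have "Phi l ` branch k j = UNIV"
    using Phi_Phi_inv[OF assms] Phi_inv_maps_into_branch by (metis UNIV_eq_I image_eqI)
  moreover have "Phi l differentiable_on branch k j"
    using branch_subset_M_dom has_derivative_Phi
    by (intro differentiable_at_imp_differentiable_on) (force simp: M_dom_def differentiable_def)
  moreover have "Phi_inv l k j differentiable_on UNIV"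
    by (intro differentiable_at_imp_differentiable_on Phi_inv_differentiable)
  ultimately show "\<exists>V W g. open V \<and> u \<in> V \<and> V \<subseteq> M_dom \<and> open W \<and> Phi l ` V = W \<and>
      (\<forall>v\<in>V. g (Phi l v) = v) \<and> (\<forall>w\<in>W. Phi l (g w) = w) \<and>
      Phi l differentiable_on V \<and> g differentiable_on W"
    using open_branch u branch_subset_M_dom Phi_inv_Phi[OF assms] Phi_Phi_inv[OF assms]
    by (intro exI[of _ "branch k j"] exI[of _ UNIV] exI[of _ "Phi_inv l k j"]) auto
qed

theorem mainTheorem2:
  fixes l :: real
  assumes "l > 0"
  shows "local_diffeo_on (Phi l) M_dom
    \<and> maps_span_on (Phi l) M_dom X3 vert
    \<and> maps_span_on (Phi l) M_dom (X4 l) (total_deriv F_circ)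
    \<and> (\<forall>(a::real) b f f1 f2 f3. a < b \<longrightarrow> thrice_diff f f1 f2 f3 {a<..<b} \<longrightarrow>
         ((\<forall>x\<in>{a<..<b}. f3 x = F_circ x (f x) (f1 x) (f2 x)) \<longleftrightarrow>
          (\<exists>\<nu> \<xi> \<eta> \<mu>::real. (\<nu>, \<xi>, \<eta>) \<noteq> (0, 0, 0) \<and>
             (\<forall>x\<in>{a<..<b}. \<nu> * (x ^ 2 + (f x) ^ 2) - 2 * \<xi> * x - 2 * \<eta> * f x + \<mu> = 0))))"
proof -
  have "l \<noteq> 0" using assms by simp
  have ode_iff: "(\<forall>x\<in>{a<..<b}. f3 x = F_circ x (f x) (f1 x) (f2 x)) \<longleftrightarrow> on_circle_or_line f {a<..<b}"
    if "thrice_diff f f1 f2 f3 {a<..<b}" for a b :: real and f f1 f2 f3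
    using ode_imp_on_circle_or_line[OF convex_real_interval(8) that]
      circle_or_line_imp_ode[OF open_greaterThanLessThan that] by blast
  show ?thesis
    using local_diffeo_on_Phi[OF \<open>l \<noteq> 0\<close>] maps_span_on_Phi_X3[OF \<open>l \<noteq> 0\<close>]
      maps_span_on_Phi_X4[OF \<open>l \<noteq> 0\<close>] ode_iff
    by (simp add: on_circle_or_line_def)
qed

end
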